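(* (i) For all $a,\ell>0$: $\kappa\in(0,1)$, $$r_0(a,\ell)\approx\frac{\ell}{\langle a\sqrt\ell\rangle},\quad\kappa(a,\ell)\approx\langle a\sqrt\ell\rangle^{-1},\quad p(a,\ell)\approx\frac1{a^2}\langle a\sqrt\ell\rangle,\quad\frac1{1-\kappa}\approx\Big\langle\frac1{a^2\ell}\Big\rangle,\quad a\ell\kappa^2\approx\min\Big\{a\ell,\frac1a\Big\}.$$ (ii) For all $(\theta,a,\ell)\in\mathbb R\times(0,\infty)^2$, with $R=R(\theta,a,\ell)$: $$R\ge r_0=p(1-\kappa),\qquad\frac Rp+\kappa\approx\Big\langle\frac Rp\Big\rangle,\qquad\Big|\frac Rp+\kappa-\frac{|\theta|}{p}\Big|\lesssim\ln\Big\langle\frac Rp\Big\rangle,\qquad|\theta|\lesssim R\lesssim p+|\theta|.$$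
   Context: Fix $m>0$. For $a,\ell>0$: $\kappa(a,\ell)=(1+4a^2\ell/m^2)^{-1/2}$, $p(a,\ell)=\frac{m}{2a^2\kappa(a,\ell)}$, $r_0(a,\ell)=\frac{m}{2a^2}\big(\sqrt{1+4a^2\ell/m^2}-1\big)$. For $\kappa\in(0,1)$, $G_\kappa(x)=\sqrt{x^2-1}-\kappa\ln(x+\sqrt{x^2-1})$ on $[1,\infty)$, $H_\kappa=G_\kappa^{-1}:[0,\infty)\to[1,\infty)$, and $R(\theta,a,\ell)=pH_\kappa(|\theta|/p)-p\kappa$. $\langle x\rangle=(2+|x|^2)^{1/2}$. $A\lesssim B$ means $A\le CB$ with $C$ independent of $\theta,a,\ell$ (possibly depending on $m$); $A\approx B$ means $A\lesssim B$ and $B\lesssim A$. *)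

theory Defs
  imports "HOL-Analysis.Analysis"
begin

definition kap :: "real \<Rightarrow> real \<Rightarrow> real \<Rightarrow> real" where
  "kap m a l = 1 / sqrt (1 + 4 * a^2 * l / m^2)"

definition pp :: "real \<Rightarrow> real \<Rightarrow> real \<Rightarrow> real" where
  "pp m a l = m / (2 * a^2 * kap m a l)"

definition r0 :: "real \<Rightarrow> real \<Rightarrow> real \<Rightarrow> real" where
  "r0 m a l = m / (2 * a^2) * (sqrt (1 + 4 * a^2 * l / m^2) - 1)"

definition G :: "real \<Rightarrow> real \<Rightarrow> real" where
  "G \<kappa> x = sqrt (x^2 - 1) - \<kappa> * ln (x + sqrt (x^2 - 1))"

definition H :: "real \<Rightarrow> real \<Rightarrow> real" where
  "H \<kappa> y = the_inv_into {1..} (G \<kappa>) y"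

definition RR :: "real \<Rightarrow> real \<Rightarrow> real \<Rightarrow> real \<Rightarrow> real" where
  "RR m \<theta> a l = pp m a l * H (kap m a l) (\<bar>\<theta>\<bar> / pp m a l) - pp m a l * kap m a l"

definition jb :: "real \<Rightarrow> real" where
  "jb x = sqrt (2 + x^2)"

end

theory Submission
  imports Defs
begin

(* The substitution x = cosh u turns G_kappa into the strictly increasing map
   u -> sinh u - kappa u, so H_kappa y = cosh u where sinh u - kappa u = y.  Then R/p = cosh u - kappa,
   and R/p + kappa - |theta|/p = exp (-u) + kappa u lies between 0 and 1 + u, which is O(ln <R/p>)
   because exp u <= 2 cosh u.  Part (i) is algebra in K = 1/kappa = sqrt (1 + 4 a^2 l / m^2):
   K^2 and <a sqrt l>^2 = 2 + a^2 l are affine in a^2 l, hence comparable up to constants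
   depending only on m. *)

lemma sinh_ge_self:
  fixes u :: real
  assumes "0 \<le> u"
  shows "u \<le> sinh u"
proof -
  have "(\<lambda>x. sinh x - x) 0 \<le> (\<lambda>x. sinh x - x) u"
    by (rule DERIV_nonneg_imp_nondecreasing[OF assms])
       (auto intro!: derivative_eq_intros exI simp: cosh_real_ge_1)
  then show ?thesis by simp
qed

lemma sinh_ge_quadratic:
  fixes u :: real
  assumes "0 \<le> u"
  shows "u + u\<^sup>2 / 2 \<le> 2 * sinh u"
proof -
  have "2 * sinh u = exp u - exp (-u)"
    using cosh_plus_sinh[of u] cosh_minus_sinh[of u] by linarith
  moreover have "1 + u + u\<^sup>2 / 2 \<le> exp u"
    using assms by (rule exp_lower_Taylor_quadratic)
  moreover have "exp (-u) \<le> 1"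
    using assms by simp
  ultimately show ?thesis by linarith
qed

lemma strict_mono_sinh_minus_linear:
  fixes k :: real
  assumes "k < 1"
  shows "strict_mono (\<lambda>u. sinh u - k * u)"
  by (rule strict_monoI, rule DERIV_pos_imp_increasing)
     (use assms in \<open>auto intro!: derivative_eq_intros exI intro: less_le_trans[OF _ cosh_real_ge_1]\<close>)

lemma sinh_minus_linear_surj:
  fixes k y :: real
  assumes "k < 1" and "0 \<le> y"
  obtains u where "0 \<le> u" and "sinh u - k * u = y"
proof -
  define b where "b = y / (1 - k)"
  have "0 \<le> b"
    using assms by (simp add: b_def)
  have "y = (1 - k) * b"
    using assms by (simp add: b_def)
  also have "\<dots> \<le> sinh b - k * b"
    using sinh_ge_self[OF \<open>0 \<le> b\<close>] by (simp add: algebra_simps)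
  finally have "y \<le> sinh b - k * b" .
  moreover have "\<forall>x. 0 \<le> x \<and> x \<le> b \<longrightarrow> isCont (\<lambda>u. sinh u - k * u) x"
    by (auto intro!: continuous_intros)
  ultimately show ?thesis
    using IVT[of "\<lambda>u. sinh u - k * u" 0 y b] \<open>0 \<le> b\<close> assms(2) that by auto
qed

lemma G_cosh:
  fixes u :: real
  assumes "0 \<le> u"
  shows "G k (cosh u) = sinh u - k * u"
proof -
  have "sqrt ((cosh u)\<^sup>2 - 1) = sinh u"
    using assms by (simp add: cosh_square_eq)
  then show ?thesis
    by (simp add: G_def cosh_plus_sinh)
qed

lemma inj_on_G:
  assumes "k < 1"
  shows "inj_on (G k) {1..}"
proof (rule inj_onI)
  fix x y :: real
  assume "x \<in> {1..}" "y \<in> {1..}" and "G k x = G k y"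
  then have "sinh (arcosh x) - k * arcosh x = sinh (arcosh y) - k * arcosh y"
    using G_cosh[of "arcosh x" k] G_cosh[of "arcosh y" k] by simp
  then have "arcosh x = arcosh y"
    using strict_mono_eq[OF strict_mono_sinh_minus_linear[OF assms]] by metis
  then show "x = y"
    using \<open>x \<in> {1..}\<close> \<open>y \<in> {1..}\<close> by (metis atLeast_iff cosh_arcosh_real)
qed

lemma H_sinh_minus_linear:
  assumes "k < 1" and "0 \<le> u"
  shows "H k (sinh u - k * u) = cosh u"
  unfolding H_def
  by (rule the_inv_into_f_eq[OF inj_on_G[OF assms(1)]])
     (use assms in \<open>auto simp: G_cosh cosh_real_ge_1\<close>)

lemma H_parametrization:
  assumes "k < 1" and "0 \<le> y"
  obtains u where "0 \<le> u" and "y = sinh u - k * u" and "H k y = cosh u"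
  using sinh_minus_linear_surj[OF assms] H_sinh_minus_linear[OF assms(1)] by metis

lemma abs_le_jb: "\<bar>x\<bar> \<le> jb x"
  unfolding jb_def by (rule real_le_rsqrt) simp

lemma one_le_jb: "1 \<le> jb x"
  unfolding jb_def by (rule real_le_rsqrt) simp

lemma plus_one_le_jb: "x + 1 \<le> 2 * jb x"
proof (rule power2_le_imp_le)
  have "0 \<le> (x - 1)\<^sup>2"
    by simp
  then have "(x + 1)\<^sup>2 \<le> 2 * (x\<^sup>2 + 1)"
    by (simp add: power2_eq_square algebra_simps)
  also have "\<dots> \<le> (2 * jb x)\<^sup>2"
    by (simp add: jb_def power_mult_distrib)
  finally show "(x + 1)\<^sup>2 \<le> (2 * jb x)\<^sup>2" .
qed (simp add: jb_def)

lemma jb_le_max: "jb x \<le> 2 * max 1 \<bar>x\<bar>"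
proof -
  have "x\<^sup>2 \<le> (max 1 \<bar>x\<bar>)\<^sup>2" and "1 \<le> (max 1 \<bar>x\<bar>)\<^sup>2"
    using power_mono[of "\<bar>x\<bar>" "max 1 \<bar>x\<bar>" 2] power_mono[of 1 "max 1 \<bar>x\<bar>" 2] by simp_all
  moreover have "(2 * max 1 \<bar>x\<bar>)\<^sup>2 = 4 * (max 1 \<bar>x\<bar>)\<^sup>2"
    by (simp add: power_mult_distrib)
  ultimately have "2 + x\<^sup>2 \<le> (2 * max 1 \<bar>x\<bar>)\<^sup>2"
    by linarith
  then have "jb x \<le> sqrt ((2 * max 1 \<bar>x\<bar>)\<^sup>2)"
    unfolding jb_def by (rule real_sqrt_le_mono)
  also have "\<dots> = 2 * max 1 \<bar>x\<bar>"
    by (rule real_sqrt_abs[THEN trans]) simp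
  finally show ?thesis .
qed

lemma ln_jb_ge: "1 / 4 \<le> ln (jb x)"
proof -
  have "4 / 3 \<le> jb x"
    unfolding jb_def by (rule real_le_rsqrt) (simp add: power2_eq_square)
  then have "1 / jb x \<le> 3 / 4"
    by (simp add: divide_simps)
  moreover have "ln (1 / jb x) \<le> 1 / jb x - 1"
    using \<open>4 / 3 \<le> jb x\<close> by (intro ln_le_minus_one) simp
  ultimately show ?thesis
    using \<open>4 / 3 \<le> jb x\<close> by (simp add: ln_div)
qed

lemma sinh_minus_linear_le_cosh:
  fixes k u :: real
  assumes "0 \<le> k" "k \<le> 1"
  shows "sinh u - k * u \<le> 2 * (cosh u - k)"
proof -
  have "2 - u \<le> cosh u + exp (-u)"
    using cosh_real_ge_1[of u] exp_ge_add_one_self[of "-u"] by linarith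
  moreover have "k * (2 - u) \<le> max (2 - u) 0"
    using assms by (cases "u \<le> 2") (auto simp: mult_left_le_one_le mult_nonneg_nonpos)
  ultimately have "k * (2 - u) \<le> cosh u + exp (-u)"
    by (smt (verit) exp_gt_zero cosh_real_ge_1)
  then show ?thesis
    using cosh_minus_sinh[of u] by (simp add: algebra_simps)
qed

lemma cosh_le_sinh_minus_linear:
  fixes k u :: real
  assumes "0 \<le> k" "k \<le> 1" "0 \<le> u"
  shows "cosh u - k \<le> 4 * (1 + (sinh u - k * u))"
proof -
  have "0 \<le> 3 * (u - 5 / 3)\<^sup>2"
    by simp
  then have "4 * u \<le> 3 + 3 * sinh u"
    using sinh_ge_quadratic[OF assms(3)] by (simp add: power2_eq_square algebra_simps)
  moreover have "cosh u \<le> 1 + sinh u"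
    using cosh_minus_sinh[of u] assms(3) by (simp add: algebra_simps)
  moreover have "k * u \<le> u"
    using assms by (simp add: mult_left_le_one_le)
  ultimately show ?thesis
    using assms(1) by (simp add: algebra_simps)
qed

lemma one_le_H:
  assumes "k < 1" "0 \<le> y"
  shows "1 \<le> H k y"
  using H_parametrization[OF assms] cosh_real_ge_1 by metis

lemma H_minus_arg_le_ln_jb:
  assumes "0 \<le> k" "k < 1" "0 \<le> y"
  shows "\<bar>H k y - y\<bar> \<le> 13 * ln (jb (H k y - k))"
proof -
  obtain u where u: "0 \<le> u" "y = sinh u - k * u" "H k y = cosh u"
    using H_parametrization[OF assms(2,3)] .
  define J where "J = jb (H k y - k)"
  have "0 < J"
    by (simp add: J_def jb_def add_pos_nonneg)
  have "H k y \<le> 2 * J"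
    using plus_one_le_jb[of "H k y - k"] assms(2) by (simp add: J_def)
  have H_minus_y: "H k y - y = exp (-u) + k * u"
    using u cosh_minus_sinh[of u] by simp
  have "exp u \<le> 4 * J"
    using cosh_plus_sinh[of u] sinh_le_cosh_real[of u] u(3) \<open>H k y \<le> 2 * J\<close> by linarith
  then have "u \<le> ln (4 * J)"
    using \<open>0 < J\<close> by (simp add: ln_ge_iff)
  then have "u \<le> ln 4 + ln J"
    using \<open>0 < J\<close> by (simp add: ln_mult)
  moreover have "ln (4::real) \<le> 2"
    using ln_2_less_1 ln_realpow[of 2 2] by simp
  moreover have "exp (-u) \<le> 1" and "k * u \<le> u"
    using u(1) assms(1,2) by (simp_all add: mult_left_le_one_le)
  moreover have "1 / 4 \<le> ln J"
    unfolding J_def by (rule ln_jb_ge)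
  ultimately have "H k y - y \<le> 13 * ln J"
    using H_minus_y by linarith
  moreover have "0 \<le> H k y - y"
    using H_minus_y u(1) assms(1) by simp
  ultimately show ?thesis
    by (simp add: J_def)
qed

lemma arg_le_H:
  assumes "0 \<le> k" "k < 1" "0 \<le> y"
  shows "y \<le> 2 * (H k y - k)"
  using H_parametrization[OF assms(2,3)] sinh_minus_linear_le_cosh assms(1,2) by (metis less_imp_le)

lemma H_le_arg:
  assumes "0 \<le> k" "k < 1" "0 \<le> y"
  shows "H k y - k \<le> 4 * (1 + y)"
  using H_parametrization[OF assms(2,3)] cosh_le_sinh_minus_linear assms(1,2) by (metis less_imp_le)

lemma scaled_H_bounds:
  fixes p k \<theta> :: real
  assumes "0 \<le> k" "k < 1" "0 < p"
  defines "R \<equiv> p * H k (\<bar>\<theta>\<bar> / p) - p * k"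
  shows "R / p + k \<le> 13 * jb (R / p)" and "jb (R / p) \<le> 13 * (R / p + k)"
    and "\<bar>R / p + k - \<bar>\<theta>\<bar> / p\<bar> \<le> 13 * ln (jb (R / p))"
    and "\<bar>\<theta>\<bar> \<le> 13 * R" and "R \<le> 13 * (p + \<bar>\<theta>\<bar>)"
    and "p * (1 - k) \<le> R"
proof -
  define y where "y = \<bar>\<theta>\<bar> / p"
  have "0 \<le> y"
    using assms(3) by (simp add: y_def)
  have "1 \<le> H k y"
    using one_le_H[OF assms(2) \<open>0 \<le> y\<close>] .
  have R_eq: "R = p * (H k y - k)"
    by (simp add: R_def y_def algebra_simps)
  then have R_div: "R / p = H k y - k"
    using assms(3) by simp
  show "p * (1 - k) \<le> R"
    unfolding R_eq using \<open>1 \<le> H k y\<close> assms(3) by simp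
  moreover have "0 \<le> p * (1 - k)"
    using assms(2,3) by simp
  ultimately have "0 \<le> R"
    by linarith
  have "H k y \<le> 2 * jb (H k y - k)"
    using plus_one_le_jb[of "H k y - k"] assms(2) by simp
  then show "R / p + k \<le> 13 * jb (R / p)"
    unfolding R_div using one_le_jb[of "H k y - k"] by simp
  have "jb (H k y - k) \<le> 2 * max 1 \<bar>H k y - k\<bar>"
    by (rule jb_le_max)
  also have "\<dots> \<le> 2 * H k y"
    using \<open>1 \<le> H k y\<close> assms(1,2) by simp
  finally show "jb (R / p) \<le> 13 * (R / p + k)"
    unfolding R_div using \<open>1 \<le> H k y\<close> by simp
  show "\<bar>R / p + k - \<bar>\<theta>\<bar> / p\<bar> \<le> 13 * ln (jb (R / p))"
    using H_minus_arg_le_ln_jb[OF assms(1,2) \<open>0 \<le> y\<close>] unfolding R_div y_def by simp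
  have "\<bar>\<theta>\<bar> = p * y"
    using assms(3) by (simp add: y_def)
  also have "\<dots> \<le> p * (2 * (H k y - k))"
    using arg_le_H[OF assms(1,2) \<open>0 \<le> y\<close>] assms(3) by simp
  also have "\<dots> = 2 * R"
    unfolding R_eq by simp
  finally show "\<bar>\<theta>\<bar> \<le> 13 * R"
    using \<open>0 \<le> R\<close> by linarith
  have "R \<le> p * (4 * (1 + y))"
    unfolding R_eq using H_le_arg[OF assms(1,2) \<open>0 \<le> y\<close>] assms(3) by simp
  also have "\<dots> = 4 * (p + \<bar>\<theta>\<bar>)"
    using assms(3) by (simp add: y_def algebra_simps)
  finally show "R \<le> 13 * (p + \<bar>\<theta>\<bar>)"
    using assms(3) by simp
qed

lemma min_one_comparable:
  fixes m t :: real
  assumes "0 < m" "0 < t"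
  shows "t * m\<^sup>2 / (m\<^sup>2 + 4 * t) \<le> (1 + m\<^sup>2 / 4) * min t 1"
    and "min t 1 \<le> (1 + 4 / m\<^sup>2) * (t * m\<^sup>2 / (m\<^sup>2 + 4 * t))"
proof -
  have "0 < m\<^sup>2 + 4 * t"
    using assms by (simp add: add_pos_pos)
  define q where "q = t * m\<^sup>2 / (m\<^sup>2 + 4 * t)"
  have "q \<le> t" and "q \<le> m\<^sup>2 / 4"
    using assms \<open>0 < m\<^sup>2 + 4 * t\<close> by (simp_all add: q_def divide_simps)
  moreover have "t \<le> (1 + m\<^sup>2 / 4) * t"
    using assms by (simp add: algebra_simps)
  ultimately show "t * m\<^sup>2 / (m\<^sup>2 + 4 * t) \<le> (1 + m\<^sup>2 / 4) * min t 1"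
    unfolding q_def[symmetric] by (cases "t \<le> 1") (simp_all add: min_absorb1 min_absorb2)
  have scaled: "(1 + 4 / m\<^sup>2) * (t * m\<^sup>2 / (m\<^sup>2 + 4 * t)) = t * (m\<^sup>2 + 4) / (m\<^sup>2 + 4 * t)"
    using assms \<open>0 < m\<^sup>2 + 4 * t\<close> by (simp add: divide_simps)
  show "min t 1 \<le> (1 + 4 / m\<^sup>2) * (t * m\<^sup>2 / (m\<^sup>2 + 4 * t))"
  proof (cases "t \<le> 1")
    case True
    then show ?thesis
      unfolding scaled using assms \<open>0 < m\<^sup>2 + 4 * t\<close> by (simp add: divide_simps)
  next
    case False
    then have "m\<^sup>2 + 4 * t \<le> t * (m\<^sup>2 + 4)"
      using assms by (simp add: algebra_simps)
    then show ?thesis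
      unfolding scaled using False \<open>0 < m\<^sup>2 + 4 * t\<close> by (simp add: divide_simps)
  qed
qed

(* An upper bound for the constants of the individual comparisons below. *)
definition comparison_const :: "real \<Rightarrow> real" where
  "comparison_const m =
     (1 + m + 2 / m) * (sqrt (2 + m\<^sup>2 / 4) + sqrt (1 + 4 / m\<^sup>2)) + m\<^sup>2 + 4 / m\<^sup>2 + 2"

lemma comparison_const_pos: "0 < m \<Longrightarrow> 0 < comparison_const m"
  unfolding comparison_const_def by (intro add_pos_pos add_nonneg_pos mult_nonneg_nonneg) simp_all

lemma le_mult_const_weaken: "(x::real) \<le> c * y \<Longrightarrow> c \<le> C \<Longrightarrow> 0 \<le> y \<Longrightarrow> x \<le> C * y"
  by (meson mult_right_mono order_trans)

locale positive_params =
  fixes m a l :: real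
  assumes m_pos: "0 < m" and a_pos: "0 < a" and l_pos: "0 < l"
begin

definition "t = a\<^sup>2 * l"
definition "K = sqrt (1 + 4 * t / m\<^sup>2)"
definition "J = sqrt (2 + t)"
definition "A = sqrt (2 + m\<^sup>2 / 4)"
definition "B = sqrt (1 + 4 / m\<^sup>2)"

lemma t_pos: "0 < t"
  using a_pos l_pos by (simp add: t_def)

lemma K_sq: "K\<^sup>2 = 1 + 4 * t / m\<^sup>2"
  unfolding K_def using t_pos by simp

lemma K_gt_1: "1 < K"
  unfolding K_def using t_pos m_pos by simp

lemma J_sq: "J\<^sup>2 = 2 + t"
  unfolding J_def using t_pos by simp

lemma J_pos: "0 < J"
  unfolding J_def using t_pos by simp

lemma A_pos: "0 < A" and B_pos: "0 < B"
  unfolding A_def B_def by (simp_all add: add_pos_nonneg)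

lemma jb_eq_J: "jb (a * sqrt l) = J"
  unfolding jb_def J_def t_def using l_pos by (simp add: power_mult_distrib)

lemma jb_inverse_eq: "jb (1 / (a\<^sup>2 * l)) = jb (1 / t)"
  by (simp add: t_def)

lemma kap_eq: "kap m a l = 1 / K"
  by (simp add: kap_def K_def t_def)

lemma pp_eq: "pp m a l = m * K / (2 * a\<^sup>2)"
  by (simp add: pp_def kap_eq)

lemma K_sq_minus_1: "(K - 1) * (K + 1) = 4 * t / m\<^sup>2"
  using K_sq by (simp add: algebra_simps power2_eq_square)

lemma r0_eq_K: "r0 m a l = m / (2 * a\<^sup>2) * (K - 1)"
  by (simp add: r0_def K_def t_def)

lemma r0_eq: "r0 m a l = 2 * l / (m * (K + 1))"
proof -
  have "r0 m a l = m / (2 * a\<^sup>2) * (K - 1)"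
    by (rule r0_eq_K)
  also have "\<dots> = m / (2 * a\<^sup>2) * ((K - 1) * (K + 1)) / (K + 1)"
    using K_gt_1 by simp
  also have "\<dots> = 2 * l / (m * (K + 1))"
    unfolding K_sq_minus_1 using a_pos m_pos K_gt_1 by (simp add: t_def field_simps power2_eq_square)
  finally show ?thesis .
qed

lemma kap_bounds: "0 < kap m a l \<and> kap m a l < 1"
  unfolding kap_eq using K_gt_1 by simp

lemma pp_pos: "0 < pp m a l"
  unfolding pp_eq using m_pos a_pos K_gt_1 by simp

lemma r0_eq_pp: "r0 m a l = pp m a l * (1 - kap m a l)"
  unfolding r0_eq_K pp_eq kap_eq using K_gt_1 a_pos by (simp add: field_simps)

lemma J_le_A_K: "J \<le> A * K"
proof (rule power2_le_imp_le)
  have "(A * K)\<^sup>2 = 2 + t + 8 * t / m\<^sup>2 + m\<^sup>2 / 4"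
    unfolding power_mult_distrib K_sq A_def using m_pos by (simp add: field_simps)
  then show "J\<^sup>2 \<le> (A * K)\<^sup>2"
    unfolding J_sq using t_pos by simp
qed (use A_pos K_gt_1 in simp)

lemma K_le_B_J: "K \<le> B * J"
proof (rule power2_le_imp_le)
  have "(B * J)\<^sup>2 = 2 + t + 8 / m\<^sup>2 + 4 * t / m\<^sup>2"
    unfolding power_mult_distrib J_sq B_def using m_pos by (simp add: field_simps)
  then show "K\<^sup>2 \<le> (B * J)\<^sup>2"
    unfolding K_sq using t_pos by simp
qed (use B_pos J_pos in simp)

lemma r0_le: "r0 m a l \<le> (2 * A / m) * (l / J)"
proof -
  have "J \<le> A * (K + 1)"
    using J_le_A_K A_pos by (simp add: algebra_simps)
  then have "1 / (K + 1) \<le> A / J"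
    using K_gt_1 by (simp add: J_pos divide_simps mult.commute)
  then have "2 * l / m * (1 / (K + 1)) \<le> 2 * l / m * (A / J)"
    using l_pos m_pos by (intro mult_left_mono) auto
  then show ?thesis
    unfolding r0_eq by (simp add: mult_ac)
qed

lemma r0_ge: "l / J \<le> (m * B) * r0 m a l"
proof -
  have "K + 1 \<le> 2 * B * J"
    using K_le_B_J K_gt_1 by simp
  then have "1 / J \<le> 2 * B / (K + 1)"
    using K_gt_1 by (simp add: J_pos divide_simps mult.commute)
  then have "l * (1 / J) \<le> l * (2 * B / (K + 1))"
    using l_pos by (intro mult_left_mono) auto
  then show ?thesis
    unfolding r0_eq using m_pos by (simp add: mult_ac)
qed

lemma kap_le: "kap m a l \<le> A * (1 / J)"
  unfolding kap_eq using J_le_A_K K_gt_1 by (simp add: J_pos divide_simps mult.commute)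

lemma kap_ge: "1 / J \<le> B * kap m a l"
  unfolding kap_eq using K_le_B_J K_gt_1 by (simp add: J_pos divide_simps mult.commute)

lemma pp_le: "pp m a l \<le> (m * B / 2) * (J / a\<^sup>2)"
proof -
  have "m / (2 * a\<^sup>2) * K \<le> m / (2 * a\<^sup>2) * (B * J)"
    using K_le_B_J m_pos a_pos by (intro mult_left_mono) auto
  then show ?thesis
    unfolding pp_eq by (simp add: mult_ac)
qed

lemma pp_ge: "J / a\<^sup>2 \<le> (2 * A / m) * pp m a l"
proof -
  have "J / a\<^sup>2 \<le> A * K / a\<^sup>2"
    using J_le_A_K a_pos by (simp add: divide_right_mono)
  then show ?thesis
    unfolding pp_eq using m_pos by (simp add: mult_ac)
qed

lemma inverse_one_minus_kap_eq: "1 / (1 - kap m a l) = K * (K + 1) * m\<^sup>2 / (4 * t)"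
proof -
  have "1 / (1 - kap m a l) = K / (K - 1)"
    unfolding kap_eq using K_gt_1 by (simp add: field_simps)
  also have "\<dots> = K * (K + 1) / ((K - 1) * (K + 1))"
    using K_gt_1 by simp
  also have "\<dots> = K * (K + 1) * m\<^sup>2 / (4 * t)"
    unfolding K_sq_minus_1 using m_pos t_pos by (simp add: field_simps)
  finally show ?thesis .
qed

lemma inverse_one_minus_kap_le: "1 / (1 - kap m a l) \<le> (m\<^sup>2 / 2 + 2) * jb (1 / (a\<^sup>2 * l))"
proof -
  have "K * (K + 1) \<le> 2 * K\<^sup>2"
    using K_gt_1 by (simp add: power2_eq_square algebra_simps)
  then have "K * (K + 1) * m\<^sup>2 / (4 * t) \<le> 2 * K\<^sup>2 * m\<^sup>2 / (4 * t)"
    using m_pos t_pos by (intro divide_right_mono mult_right_mono) auto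
  also have "\<dots> = m\<^sup>2 / 2 * (1 / t) + 2"
    unfolding K_sq using m_pos t_pos by (simp add: field_simps)
  also have "\<dots> \<le> m\<^sup>2 / 2 * jb (1 / t) + 2 * jb (1 / t)"
    using abs_le_jb[of "1 / t"] one_le_jb[of "1 / t"] t_pos by (intro add_mono mult_left_mono) auto
  finally show ?thesis
    unfolding inverse_one_minus_kap_eq jb_inverse_eq by (simp add: algebra_simps)
qed

lemma inverse_one_minus_kap_ge: "jb (1 / (a\<^sup>2 * l)) \<le> (2 + 4 / m\<^sup>2) * (1 / (1 - kap m a l))"
proof -
  define Q where "Q = 1 / (1 - kap m a l)"
  have "1 \<le> Q"
    unfolding Q_def kap_eq using K_gt_1 by (simp add: field_simps)
  have "2 \<le> K * (K + 1)"
    using K_gt_1 mult_mono[of 1 K 2 "K + 1"] by simp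
  then have "2 * m\<^sup>2 / (4 * t) \<le> Q"
    unfolding Q_def inverse_one_minus_kap_eq using m_pos t_pos
    by (intro divide_right_mono mult_right_mono) auto
  have "jb (1 / t) \<le> 2 * max 1 (1 / t)"
    using jb_le_max[of "1 / t"] t_pos by simp
  also have "\<dots> \<le> 2 + 4 / m\<^sup>2 * (2 * m\<^sup>2 / (4 * t))"
    using m_pos t_pos by (simp add: max_def)
  also have "\<dots> \<le> 2 * Q + 4 / m\<^sup>2 * Q"
    using \<open>1 \<le> Q\<close> \<open>2 * m\<^sup>2 / (4 * t) \<le> Q\<close> m_pos by (intro add_mono mult_left_mono) auto
  finally show ?thesis
    unfolding jb_inverse_eq Q_def by (simp add: algebra_simps)
qed

lemma al_kap_sq_eq: "a * l * (kap m a l)\<^sup>2 = 1 / a * (t * m\<^sup>2 / (m\<^sup>2 + 4 * t))"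
proof -
  have "(kap m a l)\<^sup>2 = m\<^sup>2 / (m\<^sup>2 + 4 * t)"
    unfolding kap_eq power_one_over K_sq using m_pos by (simp add: field_simps)
  then show ?thesis
    using a_pos by (simp add: t_def power2_eq_square)
qed

lemma min_eq: "min (a * l) (1 / a) = 1 / a * min t 1"
proof -
  have "1 / a * min t 1 = min (1 / a * t) (1 / a * 1)"
    using a_pos by (simp add: min_mult_distrib_left)
  then show ?thesis
    using a_pos by (simp add: t_def power2_eq_square)
qed

lemma al_kap_sq_le: "a * l * (kap m a l)\<^sup>2 \<le> (1 + m\<^sup>2 / 4) * min (a * l) (1 / a)"
  unfolding al_kap_sq_eq min_eq
  using mult_left_mono[OF min_one_comparable(1)[OF m_pos t_pos], of "1 / a"] a_pos by (simp add: mult_ac)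

lemma al_kap_sq_ge: "min (a * l) (1 / a) \<le> (1 + 4 / m\<^sup>2) * (a * l * (kap m a l)\<^sup>2)"
  unfolding al_kap_sq_eq min_eq
  using mult_left_mono[OF min_one_comparable(2)[OF m_pos t_pos], of "1 / a"] a_pos by (simp add: mult_ac)

lemma comparison_const_ge:
  "2 * A / m \<le> comparison_const m" "m * B \<le> comparison_const m"
  "A \<le> comparison_const m" "B \<le> comparison_const m" "m * B / 2 \<le> comparison_const m"
  "m\<^sup>2 / 2 + 2 \<le> comparison_const m" "2 + 4 / m\<^sup>2 \<le> comparison_const m"
  "1 + m\<^sup>2 / 4 \<le> comparison_const m" "1 + 4 / m\<^sup>2 \<le> comparison_const m"
proof -
  have expand: "comparison_const m = A + B + m * A + m * B + 2 * A / m + 2 * B / m + m\<^sup>2 + 4 / m\<^sup>2 + 2"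
    unfolding comparison_const_def A_def B_def by (simp add: algebra_simps add_divide_distrib)
  have "0 \<le> m * A" "0 \<le> m * B" "0 \<le> 2 * A / m" "0 \<le> 2 * B / m" "0 \<le> 4 / m\<^sup>2"
    using m_pos A_pos B_pos by simp_all
  then show
    "2 * A / m \<le> comparison_const m" "m * B \<le> comparison_const m"
    "A \<le> comparison_const m" "B \<le> comparison_const m" "m * B / 2 \<le> comparison_const m"
    "m\<^sup>2 / 2 + 2 \<le> comparison_const m" "2 + 4 / m\<^sup>2 \<le> comparison_const m"
    "1 + m\<^sup>2 / 4 \<le> comparison_const m" "1 + 4 / m\<^sup>2 \<le> comparison_const m"
    unfolding expand using A_pos B_pos by (simp_all add: zero_le_power2)
qed

lemma comparisons:
  defines "C \<equiv> comparison_const m"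
  shows "r0 m a l \<le> C * (l / jb (a * sqrt l)) \<and> l / jb (a * sqrt l) \<le> C * r0 m a l
    \<and> kap m a l \<le> C * (1 / jb (a * sqrt l)) \<and> 1 / jb (a * sqrt l) \<le> C * kap m a l
    \<and> pp m a l \<le> C * (jb (a * sqrt l) / a\<^sup>2) \<and> jb (a * sqrt l) / a\<^sup>2 \<le> C * pp m a l
    \<and> 1 / (1 - kap m a l) \<le> C * jb (1 / (a\<^sup>2 * l))
    \<and> jb (1 / (a\<^sup>2 * l)) \<le> C * (1 / (1 - kap m a l))
    \<and> a * l * (kap m a l)\<^sup>2 \<le> C * min (a * l) (1 / a)
    \<and> min (a * l) (1 / a) \<le> C * (a * l * (kap m a l)\<^sup>2)"
  unfolding jb_eq_J C_def
  using le_mult_const_weaken[OF r0_le comparison_const_ge(1)]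
    le_mult_const_weaken[OF r0_ge comparison_const_ge(2)]
    le_mult_const_weaken[OF kap_le comparison_const_ge(3)]
    le_mult_const_weaken[OF kap_ge comparison_const_ge(4)]
    le_mult_const_weaken[OF pp_le comparison_const_ge(5)]
    le_mult_const_weaken[OF pp_ge comparison_const_ge(1)]
    le_mult_const_weaken[OF inverse_one_minus_kap_le comparison_const_ge(6)]
    le_mult_const_weaken[OF inverse_one_minus_kap_ge comparison_const_ge(7)]
    le_mult_const_weaken[OF al_kap_sq_le comparison_const_ge(8)]
    le_mult_const_weaken[OF al_kap_sq_ge comparison_const_ge(9)]
    J_pos kap_bounds pp_pos a_pos l_pos one_le_jb[of "1 / (a\<^sup>2 * l)"]
  by (simp add: r0_eq_pp less_imp_le)

lemma RR_bounds:
  "let R = RR m \<theta> a l; p = pp m a l; k = kap m a l in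
     R / p + k \<le> 13 * jb (R / p) \<and> jb (R / p) \<le> 13 * (R / p + k)
   \<and> \<bar>R / p + k - \<bar>\<theta>\<bar> / p\<bar> \<le> 13 * ln (jb (R / p))
   \<and> \<bar>\<theta>\<bar> \<le> 13 * R \<and> R \<le> 13 * (p + \<bar>\<theta>\<bar>)"
  using scaled_H_bounds[of "kap m a l" "pp m a l" \<theta>] kap_bounds pp_pos
  unfolding RR_def Let_def by simp

lemma r0_le_RR: "r0 m a l \<le> RR m \<theta> a l"
  using scaled_H_bounds(6)[of "kap m a l" "pp m a l" \<theta>] kap_bounds pp_pos
  unfolding RR_def r0_eq_pp by simp

end

theorem lemma2p12:
  fixes m :: real
  assumes "m > 0"
  shows "(\<forall>a l. a > 0 \<longrightarrow> l > 0 \<longrightarrow> 0 < kap m a l \<and> kap m a l < 1)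
    \<and> (\<exists>C>0. \<forall>a l. a > 0 \<longrightarrow> l > 0 \<longrightarrow>
          r0 m a l \<le> C * (l / jb (a * sqrt l)) \<and> l / jb (a * sqrt l) \<le> C * r0 m a l
        \<and> kap m a l \<le> C * (1 / jb (a * sqrt l)) \<and> 1 / jb (a * sqrt l) \<le> C * kap m a l
        \<and> pp m a l \<le> C * (jb (a * sqrt l) / a^2) \<and> jb (a * sqrt l) / a^2 \<le> C * pp m a l
        \<and> 1 / (1 - kap m a l) \<le> C * jb (1 / (a^2 * l))
        \<and> jb (1 / (a^2 * l)) \<le> C * (1 / (1 - kap m a l))
        \<and> a * l * (kap m a l)^2 \<le> C * min (a * l) (1 / a)
        \<and> min (a * l) (1 / a) \<le> C * (a * l * (kap m a l)^2))
    \<and> (\<forall>\<theta> a l. a > 0 \<longrightarrow> l > 0 \<longrightarrow>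
          RR m \<theta> a l \<ge> r0 m a l \<and> r0 m a l = pp m a l * (1 - kap m a l))
    \<and> (\<exists>C>0. \<forall>\<theta> a l. a > 0 \<longrightarrow> l > 0 \<longrightarrow>
          (let R = RR m \<theta> a l; p = pp m a l; k = kap m a l in
             R / p + k \<le> C * jb (R / p) \<and> jb (R / p) \<le> C * (R / p + k)
           \<and> \<bar>R / p + k - \<bar>\<theta>\<bar> / p\<bar> \<le> C * ln (jb (R / p))
           \<and> \<bar>\<theta>\<bar> \<le> C * R \<and> R \<le> C * (p + \<bar>\<theta>\<bar>)))"
proof -
  have params: "positive_params m a l" if "0 < a" "0 < l" for a l
    using assms that by unfold_locales
  show ?thesis
    apply (intro conjI)
    subgoal using params positive_params.kap_bounds by blast
    subgoal using comparison_const_pos[OF assms] positive_params.comparisons[OF params] by blast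
    subgoal using positive_params.r0_le_RR[OF params] positive_params.r0_eq_pp[OF params] by blast
    subgoal using positive_params.RR_bounds[OF params] by (intro exI[of _ 13]) auto
    done
qed

end
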